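(* Let $\mathcal{C}$ be the code described in the context and let $1\le B'\le B$. Suppose the erasure pattern consists of a single burst, i.e. the erased positions are exactly $s,s+1,\ldots,s+B'-1$ for some $1\le s\le n-B'+1$, and there are no other erasures. Assume that either $r=0$ (i.e. $B$ divides $k$), or $r>0$ and $B'\le N+r$. Then every erased information symbol $u_i$ ($1\le i\le k$) can be decoded with maximum delay $T$, i.e. it can be recovered from $(y_1,\ldots,y_{i+\min\{T,n-i\}})$; in fact each erased $u_i$ can be recovered from the interleaved parity check $p_{N+j}$, where $j\in\{1,\ldots,B\}$ with $j\equiv i\pmod B$.
   Context: Code construction. Fix integers $T\ge 1$, $N\ge 0$, $B\ge 1$ with $N+B\le T$ and $N<T$, and a finite field $\mathbb{F}_q$ with $q\ge T$. Set $k=T-N$ and $n=T+B$. Write $k=mB+r$ with $m=\lfloor k/B\rfloor$ and $0\le r<B$. The code $\mathcal{C}\subseteq\mathbb{F}_q^n$ is the linear systematic code whose codeword for the message $\mathbf{u}=(u_1,\ldots,u_k)$ is $\mathbf{x}=(u_1,\ldots,u_k,p_1,\ldots,p_{N+B})$ (so $u_i$ is at position $i$ and $p_j$ at position $k+j$), where: (i) $p_1,\ldots,p_N$ are linear functions of $\mathbf{u}$ such that the length-$(k+N)$ code $\{(u_1,\ldots,u_k,p_1,\ldots,p_N)\}$ is a systematic MDS (e.g. Cauchy-based Reed–Solomon) $(k+N,k)$ code over $\mathbb{F}_q$; (ii) for $i=1,\ldots,B$, the interleaved parity check is $p_{N+i}=\sum_{\ell=0}^{m-1}u_{i+\ell B}+\mathbb{1}_{\{i\le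 r\}}\,u_{mB+i}$, i.e. $p_{N+i}$ is the sum of all $u_j$, $1\le j\le k$, with $j\equiv i \pmod B$. Decoding with delay. Given an erasure pattern $\boldsymbol{\varepsilon}\in\{0,1\}^n$ ($\varepsilon_j=1$ meaning $x_j$ is erased), the received word is $\mathbf{y}=(y_1,\ldots,y_n)$ with $y_j=x_j$ if $\varepsilon_j=0$ and $y_j=\star$ otherwise. A symbol $x_i$ can be recovered from $(y_1,\ldots,y_j)$ if for every two codewords $\mathbf{x},\mathbf{x}'\in\mathcal{C}$ that agree on all positions $\ell\le j$ with $\varepsilon_\ell=0$, one has $x_i=x'_i$; it is decoded with maximum delay $T$ if it can be recovered from $(y_1,\ldots,y_{i+\min\{T,n-i\}})$. *)

theory Defs
  imports Main
begin

text \<open>Parameters: T, N, B with k = T - N, n = T + B, m = k div B, r = k mod B.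
  Messages are functions u :: nat \<Rightarrow> 'a (only u 1, ..., u k matter);
  codewords are functions x :: nat \<Rightarrow> 'a with positions 1..n (value 0 elsewhere).\<close>

definition kk :: "nat \<Rightarrow> nat \<Rightarrow> nat" where "kk T N = T - N"
definition nn :: "nat \<Rightarrow> nat \<Rightarrow> nat" where "nn T B = T + B"

definition mds_parity :: "nat \<Rightarrow> nat \<Rightarrow> (nat \<Rightarrow> nat \<Rightarrow> 'a::field) \<Rightarrow> (nat \<Rightarrow> 'a) \<Rightarrow> nat \<Rightarrow> 'a" where
  "mds_parity k N P u j = (\<Sum>i\<in>{1..k}. P j i * u i)"

definition interleaved_parity :: "nat \<Rightarrow> nat \<Rightarrow> (nat \<Rightarrow> 'a::field) \<Rightarrow> nat \<Rightarrow> 'a" where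
  "interleaved_parity k B u i =
     (\<Sum>l<k div B. u (i + l * B)) + (if i \<le> k mod B then u ((k div B) * B + i) else 0)"

definition sys_mds_word :: "nat \<Rightarrow> nat \<Rightarrow> (nat \<Rightarrow> nat \<Rightarrow> 'a::field) \<Rightarrow> (nat \<Rightarrow> 'a) \<Rightarrow> nat \<Rightarrow> 'a" where
  "sys_mds_word k N P u j =
     (if 1 \<le> j \<and> j \<le> k then u j
      else if k < j \<and> j \<le> k + N then mds_parity k N P u (j - k)
      else 0)"

text \<open>MDS: every nonzero codeword of the linear (k+N,k) code has Hamming weight at least
  (k+N) - k + 1 = N + 1 (minimum distance N+1).\<close>
definition is_mds :: "nat \<Rightarrow> nat \<Rightarrow> (nat \<Rightarrow> nat \<Rightarrow> 'a::field) \<Rightarrow> bool" where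
  "is_mds k N P \<longleftrightarrow>
     (\<forall>u. (\<exists>i\<in>{1..k}. u i \<noteq> 0) \<longrightarrow>
        N + 1 \<le> card {j\<in>{1..k+N}. sys_mds_word k N P u j \<noteq> 0})"

definition encode :: "nat \<Rightarrow> nat \<Rightarrow> nat \<Rightarrow> (nat \<Rightarrow> nat \<Rightarrow> 'a::field) \<Rightarrow> (nat \<Rightarrow> 'a) \<Rightarrow> nat \<Rightarrow> 'a" where
  "encode T N B P u j =
     (let k = kk T N in
      if 1 \<le> j \<and> j \<le> k then u j
      else if k < j \<and> j \<le> k + N then mds_parity k N P u (j - k)
      else if k + N < j \<and> j \<le> nn T B then interleaved_parity k B u (j - k - N)
      else 0)"

definition code :: "nat \<Rightarrow> nat \<Rightarrow> nat \<Rightarrow> (nat \<Rightarrow> nat \<Rightarrow> 'a::field) \<Rightarrow> (nat \<Rightarrow> 'a) set" where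
  "code T N B P = {x. \<exists>u. x = encode T N B P u}"

definition recoverable :: "(nat \<Rightarrow> 'a) set \<Rightarrow> nat set \<Rightarrow> nat \<Rightarrow> nat \<Rightarrow> bool" where
  "recoverable C E i j \<longleftrightarrow>
     (\<forall>x\<in>C. \<forall>x'\<in>C. (\<forall>l. 1 \<le> l \<and> l \<le> j \<and> l \<notin> E \<longrightarrow> x l = x' l) \<longrightarrow> x i = x' i)"

definition decodable_with_delay :: "(nat \<Rightarrow> 'a) set \<Rightarrow> nat \<Rightarrow> nat \<Rightarrow> nat set \<Rightarrow> nat \<Rightarrow> bool" where
  "decodable_with_delay C n T E i \<longleftrightarrow> recoverable C E i (i + min T (n - i))"

end

theory Submission
  imports Defs
begin

text \<open>The interleaved parity p_{N+j} is the sum of the information symbols in the residue class of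
  j modulo B. A burst of length B' \<le> B meets each residue class at most once, so when u_i is erased
  all other summands of p_{N+j} are received and u_i is recovered from p_{N+j}, provided p_{N+j} is
  received itself. It is, because the burst ends before position k + N + j: if i lies in the last,
  incomplete interleaving block (only possible when r > 0) this is the hypothesis B' \<le> N + r,
  otherwise a full block of B symbols separates i from k + j.\<close>

lemma interleaved_parity_diff:
  "interleaved_parity k B u j - interleaved_parity k B u' j
   = interleaved_parity k B (\<lambda>t. u t - u' t) j"
  unfolding interleaved_parity_def by (simp add: sum_subtractf)

lemma offset_multiples_le_eq:
  fixes j k B :: nat
  assumes "1 \<le> j" "j \<le> B"
  shows "{l. j + l * B \<le> k} = (if j \<le> k mod B then {..k div B} else {..<k div B})"
proof (intro set_eqI iffI)
  have k: "k = k div B * B + k mod B" by simp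
  have "k mod B < B" using assms by simp
  fix l
  {
    assume "l \<in> {l. j + l * B \<le> k}"
    then have "j + l * B \<le> k" by simp
    then have "l * B < k div B * B + B" using k \<open>k mod B < B\<close> assms by linarith
    then have "l * B < Suc (k div B) * B" by simp
    then have "l \<le> k div B" by (simp only: mult_less_cancel2) simp
    moreover have "j \<le> k mod B" if "l = k div B"
      using \<open>j + l * B \<le> k\<close> k unfolding that by linarith
    ultimately show "l \<in> (if j \<le> k mod B then {..k div B} else {..<k div B})"
      by (auto simp: nat_less_le)
  next
    assume "l \<in> (if j \<le> k mod B then {..k div B} else {..<k div B})"
    then have "j + l * B \<le> k"
    proof (cases "l < k div B")
      case True
      then have "l * B + B \<le> k div B * B"
        by (metis Suc_leI add.commute mult_Suc mult_le_mono1)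
      then show ?thesis using k assms by linarith
    next
      case False
      with \<open>l \<in> _\<close> have "l * B = k div B * B" "j \<le> k mod B" by (auto split: if_splits)
      then show ?thesis using k by linarith
    qed
    then show "l \<in> {l. j + l * B \<le> k}" by simp
  }
qed

lemma residue_class_eq_image_offset_multiples:
  fixes j k B :: nat
  assumes "1 \<le> j" "j \<le> B"
  shows "{t. 1 \<le> t \<and> t \<le> k \<and> t mod B = j mod B} = (\<lambda>l. j + l * B) ` {l. j + l * B \<le> k}"
proof (intro set_eqI iffI)
  fix t assume t: "t \<in> {t. 1 \<le> t \<and> t \<le> k \<and> t mod B = j mod B}"
  have "j \<le> t"
  proof (rule ccontr)
    assume "\<not> j \<le> t"
    then have "t < B" using assms t by simp
    then show False using assms t \<open>\<not> j \<le> t\<close> by (cases "j = B") auto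
  qed
  moreover have "B dvd t - j" using mod_eq_dvd_iff_nat[OF \<open>j \<le> t\<close>] t by simp
  ultimately have "t = j + ((t - j) div B) * B" by simp
  then show "t \<in> (\<lambda>l. j + l * B) ` {l. j + l * B \<le> k}" using t by force
qed (use assms in auto)

lemma interleaved_parity_eq_sum_residue_class:
  fixes u :: "nat \<Rightarrow> 'a::field"
  assumes "1 \<le> j" "j \<le> B"
  shows "interleaved_parity k B u j = (\<Sum>t | 1 \<le> t \<and> t \<le> k \<and> t mod B = j mod B. u t)"
proof -
  have "inj_on (\<lambda>l. j + l * B) {l. j + l * B \<le> k}"
    using assms by (auto intro: inj_onI)
  then have "(\<Sum>t | 1 \<le> t \<and> t \<le> k \<and> t mod B = j mod B. u t) = (\<Sum>l | j + l * B \<le> k. u (j + l * B))"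
    unfolding residue_class_eq_image_offset_multiples[OF assms] by (simp add: sum.reindex)
  also have "\<dots> = interleaved_parity k B u j"
    by (simp add: offset_multiples_le_eq[OF assms] interleaved_parity_def algebra_simps
        lessThan_Suc_atMost[symmetric])
  finally show ?thesis ..
qed

lemma interleaved_parity_eq_single:
  fixes d :: "nat \<Rightarrow> 'a::field"
  assumes "1 \<le> j" "j \<le> B" "1 \<le> i" "i \<le> k" "i mod B = j mod B"
    and "\<And>t. 1 \<le> t \<Longrightarrow> t \<le> k \<Longrightarrow> t mod B = j mod B \<Longrightarrow> t \<noteq> i \<Longrightarrow> d t = 0"
  shows "interleaved_parity k B d j = d i"
proof -
  have "(\<Sum>t | 1 \<le> t \<and> t \<le> k \<and> t mod B = j mod B. d t) = (\<Sum>t\<in>{i}. d t)"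
    by (rule sum.mono_neutral_right) (use assms in auto)
  then show ?thesis using assms(1,2) by (simp add: interleaved_parity_eq_sum_residue_class)
qed

lemma recoverable_mono: "recoverable C E i a \<Longrightarrow> a \<le> b \<Longrightarrow> recoverable C E i b"
  unfolding recoverable_def by (meson order_trans)

lemma encode_information_symbol: "1 \<le> t \<Longrightarrow> t \<le> kk T N \<Longrightarrow> encode T N B P u t = u t"
  by (simp add: encode_def)

lemma encode_interleaved_parity:
  "N \<le> T \<Longrightarrow> 1 \<le> j \<Longrightarrow> j \<le> B \<Longrightarrow>
   encode T N B P u (kk T N + N + j) = interleaved_parity (kk T N) B u j"
  by (auto simp: encode_def nn_def kk_def Let_def)

lemma recoverable_from_interleaved_parity:
  assumes "N \<le> T" "1 \<le> j" "j \<le> B" "1 \<le> i" "i \<le> kk T N" "i mod B = j mod B"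
    and "kk T N + N + j \<notin> E"
    and "\<And>t. t \<in> E \<Longrightarrow> 1 \<le> t \<Longrightarrow> t \<le> kk T N \<Longrightarrow> t mod B = j mod B \<Longrightarrow> t = i"
  shows "recoverable (code T N B P) E i (kk T N + N + j)"
  unfolding recoverable_def
proof (intro ballI impI)
  fix x x' assume "x \<in> code T N B P" "x' \<in> code T N B P"
    and agree: "\<forall>l. 1 \<le> l \<and> l \<le> kk T N + N + j \<and> l \<notin> E \<longrightarrow> x l = x' l"
  then obtain u u' where x: "x = encode T N B P u" and x': "x' = encode T N B P u'"
    by (auto simp: code_def)
  have "x (kk T N + N + j) = x' (kk T N + N + j)"
    using agree assms(2,7) by simp
  then have "interleaved_parity (kk T N) B (\<lambda>t. u t - u' t) j = 0"
    using assms(1-3) by (simp add: x x' encode_interleaved_parity flip: interleaved_parity_diff)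
  moreover have "interleaved_parity (kk T N) B (\<lambda>t. u t - u' t) j = u i - u' i"
  proof (rule interleaved_parity_eq_single[OF assms(2-6)])
    fix t assume t: "1 \<le> t" "t \<le> kk T N" "t mod B = j mod B" "t \<noteq> i"
    then have "x t = x' t" using agree assms(8) by force
    then show "u t - u' t = 0" using t by (simp add: x x' encode_information_symbol)
  qed
  ultimately show "x i = x' i" using assms(4,5) by (simp add: x x' encode_information_symbol)
qed

lemma burst_meets_residue_class_once:
  fixes a b B :: nat
  assumes "a \<in> {s..<s + B'}" "b \<in> {s..<s + B'}" "B' \<le> B" "a mod B = b mod B"
  shows "a = b"
proof (rule ccontr)
  assume "a \<noteq> b"
  then consider "a < b" | "b < a" by linarith
  then show False
  proof cases
    case 1
    then have "B dvd b - a" using mod_eq_dvd_iff_nat[of a b B] assms(4) by simp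
    then show False using 1 assms(1-3) by (auto dest: dvd_imp_le)
  next
    case 2
    then have "B dvd a - b" using mod_eq_dvd_iff_nat[of b a B] assms(4) by simp
    then show False using 2 assms(1-3) by (auto dest: dvd_imp_le)
  qed
qed

lemma burst_ends_before_interleaved_parity:
  fixes i k N B B' :: nat
  assumes "1 \<le> i" "i \<le> k" "B' \<le> B" "k mod B = 0 \<or> B' \<le> N + k mod B"
  shows "i + B' \<le> k + N + ((i - 1) mod B + 1)"
proof -
  define q where "q = (i - 1) div B"
  define j where "j = (i - 1) mod B + 1"
  have i: "i = q * B + j" using assms(1) by (simp add: q_def j_def)
  show ?thesis
  proof (cases "q * B + B \<le> k")
    case True
    then show ?thesis using i assms(3) by (simp add: j_def)
  next
    case False
    have k: "k = (k - q * B) + q * B" "k - q * B < B" using False i assms(2) by linarith+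
    then have "k mod B = k - q * B" by (metis mod_less mod_mult_self1)
    moreover have "0 < k - q * B" using i assms(2) by (simp add: j_def)
    ultimately show ?thesis using assms(4) i k(1) by (simp add: j_def)
  qed
qed

theorem mainTheorem3:
  fixes T N B B' s :: nat and P :: "nat \<Rightarrow> nat \<Rightarrow> 'a::{field,finite}"
  assumes "1 \<le> T" and "N + B \<le> T" and "N < T" and "1 \<le> B"
    and "card (UNIV :: 'a set) \<ge> T"
    and "is_mds (kk T N) N P"
    and "1 \<le> B'" and "B' \<le> B"
    and "1 \<le> s" and "s \<le> nn T B - B' + 1"
    and "kk T N mod B = 0 \<or> (kk T N mod B > 0 \<and> B' \<le> N + kk T N mod B)"
  shows "\<forall>i\<in>{1..kk T N}. i \<in> {s..<s + B'} \<longrightarrow>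
           decodable_with_delay (code T N B P) (nn T B) T {s..<s + B'} i
         \<and> (\<exists>j\<in>{1..B}. j mod B = i mod B
              \<and> recoverable (code T N B P) {s..<s + B'} i (kk T N + N + j))"
proof (intro ballI impI)
  fix i assume i: "i \<in> {1..kk T N}" and erased: "i \<in> {s..<s + B'}"
  define j where "j = (i - 1) mod B + 1"
  have j: "1 \<le> j" "j \<le> B" "j mod B = i mod B"
    using i assms(4) unfolding j_def by (auto simp: mod_Suc_eq Suc_le_eq)
  have "j \<le> i"
    using i mod_less_eq_dividend[of "i - 1" B] unfolding j_def atLeastAtMost_iff by linarith
  have "i + B' \<le> kk T N + N + j"
    using burst_ends_before_interleaved_parity[of i "kk T N" B' B N] i assms(8,11) by (auto simp: j_def)
  then have "recoverable (code T N B P) {s..<s + B'} i (kk T N + N + j)"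
    using i j assms(3,8) erased
    by (intro recoverable_from_interleaved_parity) (auto intro: burst_meets_residue_class_once)
  moreover have "kk T N + N + j \<le> i + min T (nn T B - i)"
    using i j(2) \<open>j \<le> i\<close> assms(3) by (simp add: kk_def nn_def)
  ultimately show "decodable_with_delay (code T N B P) (nn T B) T {s..<s + B'} i
         \<and> (\<exists>j\<in>{1..B}. j mod B = i mod B
              \<and> recoverable (code T N B P) {s..<s + B'} i (kk T N + N + j))"
    using j unfolding decodable_with_delay_def by (auto intro: recoverable_mono)
qed

end
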